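(* Assume $0<A,B\le1$ and $B\ge B_0(A)$. Put $C=2+AB-A^2$, $\sigma=\sqrt{2(1+AB)}$, $x_*=\frac{\sigma}{2BC}$ and $U_*=P-x_*$. Then $U_*\ge\frac12$, and if $U_*<R(A,B)$ then $G_{A,B}(U_* )\ge 0$.
   Context: For $0<A,B\le1$ put $\kappa=\sqrt{1-A^2}$, $\varepsilon=\sqrt{1-B^2}$, $P=P(A,B)=\frac{1+AB}{B(A+B)}$, $M(U)=\kappa(P-U)$, $N(U)=\varepsilon\left(U+\frac{\kappa^2}{A(A+B)}\right)$, and $G_{A,B}(U)=B\cos(\pi M(U))-A\cos(\pi N(U))-(A+B)\cos(\pi U)$. Further $R(A,B)=\frac{1-\varepsilon\kappa^2/[A(A+B)]}{1+\varepsilon}$ and $B_0(A)=\frac{-A(1-\kappa)+\sqrt{A^2(1-\kappa)^2+8\kappa(1+\kappa)}}{2(1+\kappa)}$. *)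

theory Defs
  imports Complex_Main
begin

definition kap :: "real \<Rightarrow> real" where "kap A = sqrt (1 - A^2)"
definition eps :: "real \<Rightarrow> real" where "eps B = sqrt (1 - B^2)"
definition PP :: "real \<Rightarrow> real \<Rightarrow> real" where "PP A B = (1 + A*B) / (B*(A+B))"
definition MM :: "real \<Rightarrow> real \<Rightarrow> real \<Rightarrow> real" where
  "MM A B U = kap A * (PP A B - U)"
definition NN :: "real \<Rightarrow> real \<Rightarrow> real \<Rightarrow> real" where
  "NN A B U = eps B * (U + (kap A)^2 / (A*(A+B)))"
definition GG :: "real \<Rightarrow> real \<Rightarrow> real \<Rightarrow> real" where
  "GG A B U = B * cos (pi * MM A B U) - A * cos (pi * NN A B U) - (A+B) * cos (pi * U)"
definition RR :: "real \<Rightarrow> real \<Rightarrow> real" where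
  "RR A B = (1 - eps B * (kap A)^2 / (A*(A+B))) / (1 + eps B)"
definition B0 :: "real \<Rightarrow> real" where
  "B0 A = (- A * (1 - kap A) + sqrt (A^2 * (1 - kap A)^2 + 8 * kap A * (1 + kap A))) / (2 * (1 + kap A))"

end

theory Submission
  imports Defs "HOL-Analysis.Complex_Transcendental"
begin

text \<open>Write \<open>U\<^sub>* = 1/2 + t\<close>. Using \<open>\<sigma> \<le> (3+AB)/2\<close> (AM-GM), \<open>t \<ge> 0\<close> reduces to a
  polynomial inequality on the unit square; if moreover \<open>U\<^sub>* < R \<le> 1\<close>, then
  \<open>t \<le> 1/2\<close> and Jordan's inequality gives \<open>-cos (\<pi> U\<^sub>*) = sin (\<pi> t) \<ge> 2t\<close>. Together with
  \<open>cos y \<ge> 1 - y\<^sup>2/2\<close> for the \<open>M\<close>-term and \<open>cos \<le> 1\<close> for the \<open>N\<close>-term, this bounds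
  \<open>G(U\<^sub>*)\<close> below by a quadratic in \<open>x\<^sub>*\<close>, which at \<open>x\<^sub>* = \<sigma>/(2BC)\<close> is a positive multiple
  of \<open>2C\<^sup>2 - (A+B)\<sigma>C - \<pi>\<^sup>2(1-A\<^sup>2)(1+AB)/4\<close>; this is nonnegative by AM-GM again,
  \<open>\<pi>\<^sup>2 \<le> 9.87\<close> and a second polynomial inequality.\<close>

definition CC :: "real \<Rightarrow> real \<Rightarrow> real" where "CC A B = 2 + A*B - A^2"
definition Sig :: "real \<Rightarrow> real \<Rightarrow> real" where "Sig A B = sqrt (2*(1 + A*B))"
definition Xstar :: "real \<Rightarrow> real \<Rightarrow> real" where "Xstar A B = Sig A B / (2*B*CC A B)"
definition Ustar :: "real \<Rightarrow> real \<Rightarrow> real" where "Ustar A B = PP A B - Xstar A B"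

lemma concave_on_sin: "concave_on {0..pi} sin"
proof -
  have "convex_on {0..pi} (\<lambda>x. - sin x)"
  proof (rule convex_on_realI[where f' = "\<lambda>x. - cos x"])
    show "((\<lambda>x. - sin x) has_real_derivative - cos x) (at x)" for x :: real
      by (auto intro!: derivative_eq_intros)
    show "- cos x \<le> - cos y" if "x \<in> {0..pi}" "y \<in> {0..pi}" "x \<le> y" for x y :: real
      using cos_monotone_0_pi_le[of x y] that by auto
  qed simp
  then show ?thesis by (simp add: concave_on_def)
qed

lemma two_mult_le_sin_pi:
  fixes t :: real
  assumes "0 \<le> t" "t \<le> 1/2"
  shows "2 * t \<le> sin (pi * t)"
proof -
  have "(1 - 2*t) * sin 0 + (2*t) * sin (pi/2) \<le> sin ((1 - 2*t) *\<^sub>R 0 + (2*t) *\<^sub>R (pi/2))"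
    by (rule concave_onD[OF concave_on_sin]) (use assms in auto)
  then show ?thesis by (simp add: mult.commute)
qed

lemma cos_ge_one_minus_square_half: "1 - x^2/2 \<le> cos (x::real)"
proof -
  have "(sin (x/2))^2 \<le> (x/2)^2"
    using abs_sin_x_le_abs_x[of "x/2"] by (metis abs_ge_zero power2_abs power_mono)
  moreover have "cos x = 1 - 2 * (sin (x/2))^2"
    using cos_double_sin[of "x/2"] by simp
  ultimately show ?thesis by (simp add: power_divide)
qed

lemma pi_squared_le: "pi^2 \<le> 987/100"
proof -
  have "pi \<le> 3.1416" using pi_approx(2) by simp
  then have "pi * pi \<le> 3.1416 * 3.1416" by (intro mult_mono) auto
  then show ?thesis by (simp add: power2_eq_square)
qed

text \<open>Both polynomial inequalities are proved in the coordinates \<open>a = 1 - A\<close>,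
  \<open>b = 1 - B\<close>, where the difference splits into summands that are visibly nonnegative
  on the unit square.\<close>

lemma Ustar_poly_ineq:
  fixes A B :: real
  assumes "0 \<le> A" "A \<le> 1" "0 \<le> B" "B \<le> 1"
  shows "(3 + A*B) * (A + B) / 2 \<le> (2 + A*B - A^2) * (2 + A*B - B^2)"
proof -
  define a b where "a = 1 - A" and "b = 1 - B"
  then have A: "A = 1 - a" and B: "B = 1 - b" by simp_all
  have ab: "0 \<le> a" "a \<le> 1" "0 \<le> b" "b \<le> 1" using assms by (simp_all add: a_def b_def)
  have "b*b \<le> b" "a*a \<le> a" using ab by (auto simp: mult_le_one mult_left_le)
  then have "0 \<le> 8 - b - 2*b^2 - a + 4*a*b - 2*a^2"
    using ab by (simp add: power2_eq_square) (smt (verit) mult_nonneg_nonneg)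
  then have "0 \<le> b*((3-2*b)*(2-b)) + a*((3-2*a)*(2-a)) + a*b*(8 - b - 2*b^2 - a + 4*a*b - 2*a^2)"
    using ab by (intro add_nonneg_nonneg mult_nonneg_nonneg) auto
  also have "\<dots> = 2 * (2 + A*B - A^2) * (2 + A*B - B^2) - (3 + A*B) * (A + B)"
    unfolding A B by (simp add: algebra_simps power2_eq_square power3_eq_cube)
  finally show ?thesis by linarith
qed

lemma GG_poly_ineq:
  fixes A B :: real
  assumes "0 \<le> A" "A \<le> 1" "0 \<le> B" "B \<le> 1"
  defines "C \<equiv> 2 + A*B - A^2"
  shows "(A + B) * (3 + A*B) * C / 2 + 987/400 * ((1 - A^2) * (1 + A*B)) \<le> 2 * C^2"
proof -
  define a b where "a = 1 - A" and "b = 1 - B"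
  then have A: "A = 1 - a" and B: "B = 1 - b" by simp_all
  have ab: "0 \<le> a" "a \<le> 1" "0 \<le> b" "b \<le> 1" using assms by (simp_all add: a_def b_def)
  have "a*(987/100 - 3987/400*a) \<ge> a*(-39/400)"
    using ab mult_left_mono[of "-39/400" "987/100 - 3987/400*a" a] by linarith
  then have "a*(987/100 - 3987/400*a) \<ge> -39/400" using ab by linarith
  then have p2: "0 \<le> 13/100 + a*(987/100 - 3987/400*a) + 5/2*a^3" using ab by simp
  have "b*b \<le> b" "a*a*a \<le> 1" using ab by (auto simp: mult_le_one mult_left_le)
  moreover have "0 \<le> a*b" "0 \<le> a*(b*b)" "0 \<le> a*a" using ab by auto
  ultimately have p3: "0 \<le> 187/200 + 3/2*b - b*b + 39/400*a + 1/2*(a*b) + 1/2*(a*(b*b))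
      + 187/400*(a*a) - 1/2*(a*a*a)"
    using ab by linarith
  have "0 \<le> b*(b-2)^2/2" "0 \<le> a*(13/100 + a*(987/100 - 3987/400*a) + 5/2*a^3)"
    "0 \<le> a*b*(187/200 + 3/2*b - b*b + 39/400*a + 1/2*(a*b) + 1/2*(a*(b*b))
              + 187/400*(a*a) - 1/2*(a*a*a))"
    using ab p2 p3 by simp_all
  then have "0 \<le> b*(b-2)^2/2 + a*(13/100 + a*(987/100 - 3987/400*a) + 5/2*a^3)
       + a*b*(187/200 + 3/2*b - b*b + 39/400*a + 1/2*(a*b) + 1/2*(a*(b*b))
              + 187/400*(a*a) - 1/2*(a*a*a))"
    by linarith
  also have "\<dots> = 2 * C^2 - ((A + B) * (3 + A*B) * C / 2 + 987/400 * ((1 - A^2) * (1 + A*B)))"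
    unfolding C_def A B
    by (simp add: field_simps) (simp add: algebra_simps power2_eq_square power3_eq_cube power4_eq_xxxx)
  finally show ?thesis by linarith
qed

lemma Sig_le_arith_mean:
  assumes "0 \<le> 1 + A*B"
  shows "Sig A B \<le> (3 + A*B)/2"
  using arith_geo_mean_sqrt[of 2 "1 + A*B"] assms unfolding Sig_def by simp

lemma CC_ge_one:
  assumes "0 \<le> A" "A \<le> 1" "0 \<le> B"
  shows "1 \<le> CC A B"
  using assms mult_nonneg_nonneg[of A B] power_le_one[of A 2] unfolding CC_def by linarith

lemma PP_minus_half:
  assumes "0 < B" "0 < A + B"
  shows "PP A B - 1/2 = (2 + A*B - B^2) / (2*B*(A+B))"
proof -
  have "0 < B*(A+B)" using assms by simp
  then have "0 < A*B + B*B" by (simp add: algebra_simps)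
  then show ?thesis unfolding PP_def using assms by (simp add: field_simps power2_eq_square)
qed

lemma RR_le_one:
  assumes "0 < A" "0 < A + B" "\<bar>B\<bar> \<le> 1"
  shows "RR A B \<le> 1"
proof -
  have e: "0 \<le> eps B" unfolding eps_def using assms by (simp add: abs_square_le_1)
  then have "0 \<le> eps B * (kap A)^2 / (A*(A+B))"
    using assms by (intro divide_nonneg_pos mult_nonneg_nonneg) auto
  then show ?thesis unfolding RR_def using e by (simp add: divide_le_eq)
qed

lemma GG_lower_bound:
  assumes "0 < A" "0 < B" "1/2 \<le> U" "U \<le> 1"
  shows "B * (1 - (pi * MM A B U)^2/2) - A + 2*(A+B)*(U - 1/2) \<le> GG A B U"
proof -
  have "cos (pi * U) = - sin (pi * (U - 1/2))"
    using cos_add[of "pi * (U - 1/2)" "pi/2"] by (simp add: algebra_simps)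
  moreover have "(A+B) * (2*(U - 1/2)) \<le> (A+B) * sin (pi * (U - 1/2))"
    using assms by (intro mult_left_mono two_mult_le_sin_pi) auto
  moreover have "B * (1 - (pi * MM A B U)^2/2) \<le> B * cos (pi * MM A B U)"
    using assms cos_ge_one_minus_square_half by simp
  moreover have "A * cos (pi * NN A B U) \<le> A" using assms by simp
  ultimately show ?thesis
    unfolding GG_def by (simp add: algebra_simps)
qed

lemma GG_PP_minus_lower_bound:
  assumes "0 < A" "0 < B" "1/2 \<le> PP A B - x" "PP A B - x \<le> 1"
  shows "2/B - 2*(A+B)*x - B * (pi * kap A * x)^2/2 \<le> GG A B (PP A B - x)"
proof -
  have "PP A B - x - 1/2 = (2 + A*B - B^2) / (2*B*(A+B)) - x"
    using assms PP_minus_half[of B A] by simp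
  then have "2*(A+B)*(PP A B - x - 1/2)
      = 2*(A+B) * ((2 + A*B - B^2) / (2*B*(A+B))) - 2*(A+B)*x"
    by (simp only: right_diff_distrib)
  moreover have "2*(A+B) * ((2 + A*B - B^2) / (2*B*(A+B))) = (2 + A*B - B^2)/B"
    using assms by (simp add: divide_simps)
  ultimately have "2*(A+B)*(PP A B - x - 1/2) = (2 + A*B - B^2)/B - 2*(A+B)*x"
    by simp
  moreover have "B - A + (2 + A*B - B^2)/B = 2/B"
    using assms by (simp add: field_simps power2_eq_square)
  moreover have "MM A B (PP A B - x) = kap A * x" unfolding MM_def by simp
  ultimately show ?thesis
    using GG_lower_bound[OF assms] by (simp add: algebra_simps)
qed

lemma Ustar_ge_half:
  assumes "0 < A" "A \<le> 1" "0 < B" "B \<le> 1"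
  shows "1/2 \<le> Ustar A B"
proof -
  have C: "1 \<le> CC A B" using assms by (intro CC_ge_one) auto
  have "0 \<le> 1 + A*B" using assms mult_pos_pos[of A B] by linarith
  then have "Sig A B \<le> (3 + A*B)/2" by (rule Sig_le_arith_mean)
  then have "Sig A B * (A + B) \<le> (3 + A*B) * (A + B) / 2"
    using assms by (simp add: mult_right_mono)
  also have "\<dots> \<le> CC A B * (2 + A*B - B^2)"
    using Ustar_poly_ineq[of A B] assms unfolding CC_def by simp
  finally have Sig_bound: "Sig A B * (A + B) \<le> CC A B * (2 + A*B - B^2)" .
  have "Xstar A B = Sig A B * (A + B) / (2*B*(A+B)*CC A B)"
    unfolding Xstar_def using assms C by simp
  also have "\<dots> \<le> CC A B * (2 + A*B - B^2) / (2*B*(A+B)*CC A B)"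
    using assms C Sig_bound by (intro divide_right_mono) auto
  also have "\<dots> = (2 + A*B - B^2) / (2*B*(A+B))" using assms C by simp
  finally show ?thesis unfolding Ustar_def using PP_minus_half[of B A] assms by simp
qed

lemma quadratic_bound_at_Xstar:
  assumes "0 < A" "A \<le> 1" "0 < B" "B \<le> 1"
  defines "C \<equiv> CC A B" and "x \<equiv> Xstar A B"
  shows "2/B - 2*(A+B)*x - B * (pi * kap A * x)^2/2
       = (2*C^2 - (A+B) * Sig A B * C - pi^2 * ((1 - A^2) * (1 + A*B))/4) / (B*C^2)"
proof -
  note AB = assms(1-4)
  have "0 < C" unfolding C_def using AB CC_ge_one[of A B] by simp
  have "(kap A)^2 = 1 - A^2" unfolding kap_def using AB by (simp add: power_le_one)
  moreover have "x^2 = 2*(1 + A*B) / (4*B^2*C^2)"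
    unfolding x_def Xstar_def C_def[symmetric] Sig_def using AB
    by (simp add: power_divide power_mult_distrib)
  ultimately have "B * (pi * kap A * x)^2/2 = B * (pi^2 * (1 - A^2) * (2*(1 + A*B) / (4*B^2*C^2)))/2"
    by (simp add: power_mult_distrib)
  also have "\<dots> = pi^2 * ((1 - A^2) * (1 + A*B))/4 / (B*C^2)"
    using AB \<open>0 < C\<close> by (simp add: field_simps power2_eq_square)
  finally have "B * (pi * kap A * x)^2/2 = pi^2 * ((1 - A^2) * (1 + A*B))/4 / (B*C^2)" .
  moreover have "2/B - 2*(A+B)*x = (2*C^2 - (A+B) * Sig A B * C) / (B*C^2)"
    unfolding x_def Xstar_def C_def[symmetric] using AB \<open>0 < C\<close>
    by (simp add: field_simps power2_eq_square)
  ultimately show ?thesis by (simp add: diff_divide_distrib)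
qed

lemma GG_Ustar_nonneg:
  assumes "0 < A" "A \<le> 1" "0 < B" "B \<le> 1" "Ustar A B < RR A B"
  shows "0 \<le> GG A B (Ustar A B)"
proof -
  define C where "C = CC A B"
  have C: "1 \<le> C" unfolding C_def using assms by (intro CC_ge_one) auto
  have "0 \<le> 1 + A*B" using assms mult_pos_pos[of A B] by linarith
  then have "(A+B) * Sig A B * C \<le> (A+B) * ((3 + A*B)/2) * C"
    using assms C by (intro mult_right_mono mult_left_mono Sig_le_arith_mean) auto
  moreover have "pi^2 * ((1 - A^2) * (1 + A*B)) \<le> 987/100 * ((1 - A^2) * (1 + A*B))"
    using assms pi_squared_le by (intro mult_right_mono) (auto simp: power_le_one)
  moreover have "(A + B) * (3 + A*B) * C / 2 + 987/400 * ((1 - A^2) * (1 + A*B)) \<le> 2 * C^2"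
    unfolding C_def CC_def using assms by (intro GG_poly_ineq) auto
  ultimately have "0 \<le> 2*C^2 - (A+B) * Sig A B * C - pi^2 * ((1 - A^2) * (1 + A*B))/4"
    by simp
  then have "0 \<le> 2/B - 2*(A+B)*Xstar A B - B * (pi * kap A * Xstar A B)^2/2"
    unfolding quadratic_bound_at_Xstar[OF assms(1-4)] C_def[symmetric] using assms by simp
  also have "\<dots> \<le> GG A B (Ustar A B)"
  proof -
    have "1/2 \<le> Ustar A B" using Ustar_ge_half[OF assms(1-4)] .
    moreover have "Ustar A B \<le> 1" using assms RR_le_one[of A B] by simp
    ultimately show ?thesis unfolding Ustar_def using assms by (intro GG_PP_minus_lower_bound) auto
  qed
  finally show ?thesis .
qed

theorem mainTheorem8:
  fixes A B :: real
  assumes "0 < A" "A \<le> 1" "0 < B" "B \<le> 1" "B \<ge> B0 A"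
  shows "let C = 2 + A*B - A^2; \<sigma> = sqrt (2*(1 + A*B)); xs = \<sigma> / (2*B*C);
             Us = PP A B - xs
         in Us \<ge> 1/2 \<and> (Us < RR A B \<longrightarrow> GG A B Us \<ge> 0)"
  using Ustar_ge_half[OF assms(1-4)] GG_Ustar_nonneg[OF assms(1-4)]
  unfolding Let_def Ustar_def Xstar_def Sig_def CC_def by simp

end
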